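(* Let $w,s,t$ be positive integers with $t\mid s$ and $t\ne s$, and suppose $2\mid s/t$ but $4\nmid s/t$. For $l\in I\big(s/(2t)\big)$ set $$f(l)=\sum_{k\in\{l,\;2l\}}(-1)^{\omega(s/(kt))}(-1)^{ktw}\binom{k(tw-1)-1}{k-1}.$$ Then $f(l)\equiv0\pmod 4$ for every $l\in I\big(s/(2t)\big)$.
   Context: For a positive integer $n$, $\omega(n)$ is the number of distinct primes dividing $n$, and $I(n)=\{k\in\mathbb{N}: k\mid n \text{ and } n/k \text{ is square-free}\}$. Binomial coefficients $\binom{n}{m}$ with $n\in\mathbb{Z}$, $m\ge0$ mean $n(n-1)\cdots(n-m+1)/m!$. *)

theory Defs
  imports "HOL-Computational_Algebra.Computational_Algebra"
begin

definition omega :: "nat \<Rightarrow> nat" where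
  "omega n = card (prime_factors n)"

definition Iset :: "nat \<Rightarrow> nat set" where
  "Iset n = {k. k > 0 \<and> k dvd n \<and> squarefree (n div k)}"

definition ibinom :: "int \<Rightarrow> nat \<Rightarrow> int" where
  "ibinom n m = (\<Prod>i<m. n - int i) div fact m"

end

theory Submission
  imports Defs "HOL-Number_Theory.Cong"
begin

text \<open>Write \<open>s/(lt) = 2r\<close> with \<open>l, r\<close> odd, so the two summands carry opposite signs
\<open>(-1)^\<omega>(2r) = -(-1)^\<omega>(r)\<close>, and with \<open>c = l(tw-1)\<close> the claim becomes
\<open>binom(2c-1, 2l-1) \<equiv> (-1)^(ltw) binom(c-1, l-1) (mod 4)\<close>. Splitting the falling
factorial of length \<open>2L+1\<close> and \<open>(2L+1)!\<close> into even- and odd-indexed factors gives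
\<open>binom(2c-1, 2L+1) (2L+1)!! = binom(c-1, L) \<Prod>\<^bsub>j \<le> L\<^esub> (2c-1-2j)\<close>.
Modulo 4 the last product is \<open>(-1)^(L+1) (2L+1)!! (1 + 2(L+1)c)\<close>, and the odd number
\<open>(2L+1)!!\<close> squares to 1, which yields the congruence.\<close>

lemma ibinom_mult_fact: "ibinom x m * fact m = (\<Prod>i<m. x - int i)"
proof -
  have "fact m dvd (\<Prod>i<m. x - int i)"
    unfolding lessThan_atLeast0 falling_fact_pochhammer' by (rule fact_dvd_pochhammer)
  then show ?thesis unfolding ibinom_def by simp
qed

lemma prod_lessThan_odd_even_split:
  fixes g :: "nat \<Rightarrow> 'a::comm_monoid_mult"
  shows "(\<Prod>i<2*L+1. g i) = (\<Prod>j<L. g (2*j+1)) * (\<Prod>j<L+1. g (2*j))"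
proof (induction L)
  case (Suc L)
  have "2 * Suc L + 1 = Suc (Suc (2*L+1))" by simp
  then show ?case using Suc by (simp only: prod.lessThan_Suc) (simp add: ac_simps)
qed simp

definition odd_fact :: "nat \<Rightarrow> int" where
  "odd_fact m = (\<Prod>j<m. 2 * int j + 1)"

definition odd_falling :: "int \<Rightarrow> nat \<Rightarrow> int" where
  "odd_falling c m = (\<Prod>j<m. 2*c - 1 - 2 * int j)"

lemma odd_odd_fact: "odd (odd_fact m)"
  unfolding odd_fact_def by (induction m) auto

lemma fact_odd_split: "(fact (2*L+1) :: int) = 2 ^ L * fact L * odd_fact (L+1)"
proof -
  have "(fact (2*L+1) :: int) = (\<Prod>i<2*L+1. 1 + int i)"
    unfolding fact_prod_Suc of_nat_prod atLeast0LessThan by simp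
  also have "\<dots> = (\<Prod>j<L. 2 * (1 + int j)) * odd_fact (L+1)"
    unfolding prod_lessThan_odd_even_split odd_fact_def by (simp add: algebra_simps)
  also have "(\<Prod>j<L. 2 * (1 + int j)) = 2 ^ L * fact L"
    unfolding prod.distrib fact_prod_Suc of_nat_prod atLeast0LessThan by simp
  finally show ?thesis .
qed

lemma falling_odd_split:
  "(\<Prod>i<2*L+1. 2*c - 1 - int i) = 2 ^ L * (\<Prod>i<L. c - 1 - int i) * odd_falling c (L+1)"
proof -
  have "(\<Prod>i<2*L+1. 2*c - 1 - int i) = (\<Prod>j<L. 2 * (c - 1 - int j)) * odd_falling c (L+1)"
    unfolding prod_lessThan_odd_even_split odd_falling_def by (simp add: algebra_simps)
  also have "(\<Prod>j<L. 2 * (c - 1 - int j)) = 2 ^ L * (\<Prod>i<L. c - 1 - int i)"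
    by (simp only: prod.distrib prod_constant card_lessThan)
  finally show ?thesis .
qed

lemma ibinom_double_odd:
  "ibinom (2*c - 1) (2*L+1) * odd_fact (L+1) = ibinom (c - 1) L * odd_falling c (L+1)"
proof -
  have "ibinom (2*c - 1) (2*L+1) * (2 ^ L * fact L * odd_fact (L+1))
      = 2 ^ L * (ibinom (c - 1) L * fact L) * odd_falling c (L+1)"
    unfolding fact_odd_split[symmetric] ibinom_mult_fact falling_odd_split ..
  then have "(2 ^ L * fact L) * (ibinom (2*c - 1) (2*L+1) * odd_fact (L+1))
      = (2 ^ L * fact L) * (ibinom (c - 1) L * odd_falling c (L+1))"
    by (simp only: ac_simps)
  then show ?thesis by simp
qed

lemma odd_falling_cong:
  "[odd_falling c m = (-1) ^ m * odd_fact m * (1 + 2 * int m * c)] (mod 4)"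
proof (induction m)
  case (Suc m)
  have "odd_falling c (Suc m) = odd_falling c m * (2*c - 1 - 2 * int m)"
    by (simp add: odd_falling_def)
  also have "[\<dots> = (-1) ^ m * odd_fact m * (1 + 2 * int m * c) * (2*c - 1 - 2 * int m)] (mod 4)"
    using Suc by (rule cong_mult) simp
  also have "(-1) ^ m * odd_fact m * (1 + 2 * int m * c) * (2*c - 1 - 2 * int m)
      = (-1) ^ Suc m * odd_fact (Suc m) * (1 + 2 * int (Suc m) * c)
        + 4 * ((-1) ^ m * odd_fact m * (c + int m * c^2 + int m * c))"
    by (simp add: odd_fact_def algebra_simps power2_eq_square)
  also have "[\<dots> = (-1) ^ Suc m * odd_fact (Suc m) * (1 + 2 * int (Suc m) * c)] (mod 4)"
    by (simp add: cong_iff_dvd_diff)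
  finally show ?case .
qed (simp add: odd_falling_def odd_fact_def)

lemma odd_square_cong: "odd (d::int) \<Longrightarrow> [d * d = 1] (mod 4)"
  by (elim oddE) (simp add: cong_iff_dvd_diff algebra_simps)

lemma ibinom_double_odd_cong:
  assumes "even L"
  shows "[ibinom (2*c - 1) (2*L+1) = - (1 + 2*c) * ibinom (c - 1) L] (mod 4)"
proof -
  define B A D N where "B = ibinom (2*c - 1) (2*L+1)" and "A = ibinom (c - 1) L"
    and "D = odd_fact (L+1)" and "N = odd_falling c (L+1)"
  have "[B = B * (D * D)] (mod 4)"
    using odd_square_cong[OF odd_odd_fact[of "L+1"]] unfolding D_def
    by (metis cong_scalar_left cong_sym mult.right_neutral)
  also have "B * (D * D) = A * N * D"
    using ibinom_double_odd[of c L] unfolding A_def B_def D_def N_def by (simp add: ac_simps)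
  also have "[A * N * D = A * (- D * (1 + 2 * int (L+1) * c)) * D] (mod 4)"
    using odd_falling_cong[of c "L+1"] assms unfolding D_def N_def
    by (intro cong_mult cong_refl) simp
  also have "A * (- D * (1 + 2 * int (L+1) * c)) * D = - (1 + 2 * int (L+1) * c) * A * (D * D)"
    by (simp add: algebra_simps)
  also have "[\<dots> = - (1 + 2 * int (L+1) * c) * A * 1] (mod 4)"
    using odd_square_cong[OF odd_odd_fact[of "L+1"]] unfolding D_def
    by (rule cong_scalar_left)
  also have "[- (1 + 2 * int (L+1) * c) * A * 1 = - (1 + 2*c) * A] (mod 4)"
    using assms by (elim evenE) (simp add: cong_iff_dvd_diff algebra_simps)
  finally show ?thesis unfolding A_def B_def .
qed

lemma neg_one_power_cong: "[(-1) ^ p = 1 - 2 * int p] (mod 4)"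
proof (induction p)
  case (Suc p)
  have "(-1::int) ^ Suc p = - ((-1) ^ p)" by simp
  also have "[\<dots> = - (1 - 2 * int p)] (mod 4)"
    using Suc by (simp only: cong_minus_minus_iff)
  also have "[- (1 - 2 * int p) = 1 - 2 * int (Suc p)] (mod 4)"
    by (simp add: cong_iff_dvd_diff)
  finally show ?case .
qed simp

lemma ibinom_pair_cong:
  fixes l p :: nat
  assumes "odd l"
  shows "[ibinom (int (2*l) * (int p - 1) - 1) (2*l - 1)
          = (-1) ^ (l*p) * ibinom (int l * (int p - 1) - 1) (l - 1)] (mod 4)"
proof -
  define c where "c = int l * (int p - 1)"
  obtain u where u: "l = 2*u + 1" using assms oddE by blast
  have "ibinom (int (2*l) * (int p - 1) - 1) (2*l - 1) = ibinom (2*c - 1) (2*(l - 1) + 1)"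
    using u by (simp add: c_def algebra_simps)
  also have "[\<dots> = - (1 + 2*c) * ibinom (c - 1) (l - 1)] (mod 4)"
    using u by (intro ibinom_double_odd_cong) simp
  also have "[- (1 + 2*c) = 1 - 2 * int p] (mod 4)"
    unfolding c_def u by (simp add: cong_iff_dvd_diff algebra_simps)
  then have "[- (1 + 2*c) * ibinom (c - 1) (l - 1) = (-1) ^ p * ibinom (c - 1) (l - 1)] (mod 4)"
    using neg_one_power_cong[of p] by (intro cong_scalar_right) (metis cong_sym cong_trans)
  also have "(-1) ^ p = (-1 :: int) ^ (l*p)"
    using assms by (simp add: power_mult)
  finally show ?thesis by (simp add: c_def)
qed

lemma omega_double: "odd r \<Longrightarrow> omega (2*r) = Suc (omega r)"
proof -
  assume "odd r"
  then have "r \<noteq> 0" using odd_pos by fastforce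
  then have "prime_factors (2*r) = insert 2 (prime_factors r)"
    by (simp add: prime_factors_product prime_prime_factors)
  moreover have "2 \<notin> prime_factors r"
    using \<open>odd r\<close> by (auto simp: in_prime_factors_iff)
  ultimately show ?thesis by (simp add: omega_def)
qed

lemma half_quotient_divisor:
  fixes s t l :: nat
  assumes "t > 0" "t dvd s" "2 dvd s div t" "\<not> 4 dvd s div t" "l dvd s div (2*t)"
  obtains r where "odd l" "odd r" "s div (l*t) = 2*r" "s div (2*l*t) = r"
proof -
  obtain m where m: "s = 2*t*m"
  proof -
    obtain k where "s = t*k" using assms(2) ..
    moreover obtain m where "k = 2*m" using assms(1,3) \<open>s = t*k\<close> by auto
    ultimately show thesis by (intro that[of m]) (simp add: ac_simps)
  qed
  have "odd m"
    using assms(1,4) m by auto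
  moreover obtain r where r: "m = l*r"
    using assms(1,5) m by (auto elim!: dvdE)
  ultimately have "odd l" "odd r" by simp_all
  moreover have "s div (l*t) = 2*r" "s div (2*l*t) = r"
    using m r assms(1) \<open>odd l\<close> by (auto simp: ac_simps)
  ultimately show thesis by (rule that)
qed

theorem lemma3p4:
  fixes w s t :: nat
  assumes "w > 0" and "s > 0" and "t > 0"
    and "t dvd s" and "t \<noteq> s"
    and "2 dvd (s div t)" and "\<not> 4 dvd (s div t)"
  shows "\<forall>l \<in> Iset (s div (2 * t)).
           (\<Sum>k\<in>{l, 2 * l}.
              (-1::int) ^ omega (s div (k * t)) * (-1) ^ (k * t * w)
              * ibinom (int k * (int t * int w - 1) - 1) (k - 1)) mod 4 = 0"
proof
  fix l assume "l \<in> Iset (s div (2 * t))"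
  then have "l dvd s div (2 * t)" by (simp add: Iset_def)
  then obtain r where "odd l" "odd r" and quot: "s div (l*t) = 2*r" "s div (2*l*t) = r"
    using half_quotient_divisor assms(3,4,6,7) by metis
  define A B where "A = ibinom (int l * (int (t*w) - 1) - 1) (l - 1)"
    and "B = ibinom (int (2*l) * (int (t*w) - 1) - 1) (2*l - 1)"
  have "l \<noteq> 2*l" using odd_pos[OF \<open>odd l\<close>] by simp
  then have "(\<Sum>k\<in>{l, 2 * l}.
              (-1::int) ^ omega (s div (k * t)) * (-1) ^ (k * t * w)
              * ibinom (int k * (int t * int w - 1) - 1) (k - 1))
      = (-1) ^ Suc (omega r) * (-1) ^ (l*(t*w)) * A + (-1) ^ omega r * B" (is "?sum = _")
    using quot omega_double[OF \<open>odd r\<close>] neg_one_even_power[of "2*l*t*w"]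
    by (simp add: A_def B_def ac_simps)
  also have "\<dots> = (-1) ^ omega r * (B - (-1) ^ (l*(t*w)) * A)"
    by (simp add: algebra_simps)
  also have "[\<dots> = (-1) ^ omega r * 0] (mod 4)"
    using ibinom_pair_cong[OF \<open>odd l\<close>, of "t*w"]
    by (intro cong_scalar_left) (simp add: A_def B_def cong_iff_dvd_diff)
  finally show "?sum mod 4 = 0"
    by (simp add: cong_0_iff)
qed

end
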